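(* Let $G$ be a finite group, $H\trianglelefteq G$ a normal subgroup and $g,h\in G$. Then (i) $\eta_g(\eta_g(H))=\eta_g(H)$; (ii) $\eta_{gh}(H)\le\eta_g(H)\eta_h(H)$; (iii) $\mathrm{FitL}(\eta_{gh}(H))\le\max\{\mathrm{FitL}(\eta_g(H)),\mathrm{FitL}(\eta_h(H))\}$.
   Context: Commutators: $[x,y]=x^{-1}y^{-1}xy$, $x^y=y^{-1}xy$; for subsets $X,Y\subseteq G$, $[X,Y]$ is the subgroup generated by all $[x,y]$, and $[X,{}_kY]=[\cdots[[X,Y],Y]\cdots,Y]$ with $k$ copies of $Y$. $g^G=\{g^x:x\in G\}$. Fix $M\in\mathbb{N}$ such that $[X,{}_MY]=[X,{}_iY]$ for all $i\ge M$ and all $X,Y\subseteq G$ with $X^G=X$, $Y^G=Y$. For $H\trianglelefteq G$ and $g\in G$, $\eta_g(H)=[H,{}_M\,g^G]$ (a normal subgroup of $G$ contained in $H$). $\mathrm{FitL}(A)$ denotes the Fitting length of a finite group $A$: the least $d$ such that there is a series $1=A_0\trianglelefteq\cdots\trianglelefteq A_d=A$ with nilpotent quotients (taken as $\infty$ if no such series exists). *)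

theory Defs
  imports "HOL-Algebra.Algebra" "HOL-Library.Extended_Nat"
begin

definition gcomm :: "('a, 'b) monoid_scheme \<Rightarrow> 'a \<Rightarrow> 'a \<Rightarrow> 'a" where
  "gcomm G x y = inv\<^bsub>G\<^esub> x \<otimes>\<^bsub>G\<^esub> inv\<^bsub>G\<^esub> y \<otimes>\<^bsub>G\<^esub> x \<otimes>\<^bsub>G\<^esub> y"

definition comm_sg :: "('a, 'b) monoid_scheme \<Rightarrow> 'a set \<Rightarrow> 'a set \<Rightarrow> 'a set" where
  "comm_sg G S T = generate G {z. \<exists>x\<in>S. \<exists>y\<in>T. z = gcomm G x y}"

fun iter_comm :: "('a, 'b) monoid_scheme \<Rightarrow> 'a set \<Rightarrow> 'a set \<Rightarrow> nat \<Rightarrow> 'a set" where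
  "iter_comm G S T 0 = S"
| "iter_comm G S T (Suc k) = comm_sg G (iter_comm G S T k) T"

definition conj_class :: "('a, 'b) monoid_scheme \<Rightarrow> 'a \<Rightarrow> 'a set" where
  "conj_class G g = {inv\<^bsub>G\<^esub> x \<otimes>\<^bsub>G\<^esub> g \<otimes>\<^bsub>G\<^esub> x | x. x \<in> carrier G}"

definition conj_set :: "('a, 'b) monoid_scheme \<Rightarrow> 'a set \<Rightarrow> 'a set" where
  "conj_set G S = {inv\<^bsub>G\<^esub> y \<otimes>\<^bsub>G\<^esub> x \<otimes>\<^bsub>G\<^esub> y | x y. x \<in> S \<and> y \<in> carrier G}"

definition stab_const :: "('a, 'b) monoid_scheme \<Rightarrow> nat \<Rightarrow> bool" where
  "stab_const G M \<longleftrightarrow> (\<forall>S T i. S \<subseteq> carrier G \<longrightarrow> T \<subseteq> carrier G \<longrightarrow>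
      conj_set G S = S \<longrightarrow> conj_set G T = T \<longrightarrow> M \<le> i \<longrightarrow>
      iter_comm G S T M = iter_comm G S T i)"

definition eta :: "('a, 'b) monoid_scheme \<Rightarrow> nat \<Rightarrow> 'a \<Rightarrow> 'a set \<Rightarrow> 'a set" where
  "eta G M g H = iter_comm G H (conj_class G g) M"

fun lcs :: "('a, 'b) monoid_scheme \<Rightarrow> nat \<Rightarrow> 'a set" where
  "lcs G 0 = carrier G"
| "lcs G (Suc k) = comm_sg G (lcs G k) (carrier G)"

definition nilpotent_grp :: "('a, 'b) monoid_scheme \<Rightarrow> bool" where
  "nilpotent_grp G \<longleftrightarrow> group G \<and> (\<exists>k. lcs G k = {\<one>\<^bsub>G\<^esub>})"

definition nil_series :: "('a, 'b) monoid_scheme \<Rightarrow> (nat \<Rightarrow> 'a set) \<Rightarrow> nat \<Rightarrow> bool" where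
  "nil_series G A d \<longleftrightarrow> A 0 = {\<one>\<^bsub>G\<^esub>} \<and> A d = carrier G \<and>
     (\<forall>i\<le>d. subgroup (A i) G) \<and>
     (\<forall>i<d. A i \<lhd> G\<lparr>carrier := A (Suc i)\<rparr> \<and>
            nilpotent_grp (G\<lparr>carrier := A (Suc i)\<rparr> Mod A i))"

definition FitL :: "('a, 'b) monoid_scheme \<Rightarrow> enat" where
  "FitL G = (if \<exists>d A. nil_series G A d then enat (LEAST d. \<exists>A. nil_series G A d) else \<infinity>)"

end

theory Submission
  imports Defs
begin

text \<open>
  Part (i) is the stabilisation \<open>[H, \<^sub>2\<^sub>M g\<^sup>G] = [H, \<^sub>M g\<^sup>G]\<close>.
  Parts (ii) and (iii) rest on one filtration argument. Let \<open>P\<^sub>a\<close> and \<open>Q\<^sub>b\<close> be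
  normal subgroups with \<open>[P\<^sub>a, T\<^sub>1] \<le> P\<^sub>a\<^sub>+\<^sub>1\<close> and \<open>[Q\<^sub>b, T\<^sub>2] \<le> Q\<^sub>b\<^sub>+\<^sub>1\<close>,
  and let \<open>T \<subseteq> T\<^sub>1 T\<^sub>2\<close>. Writing \<open>\<Pi>\<^sub>m\<close> for the product of all \<open>P\<^sub>a \<inter> Q\<^sub>b\<close> with
  \<open>a + b = m\<close>, the identity \<open>[u, c d] = [u, d] [u, c]\<^sup>d\<close> gives \<open>[\<Pi>\<^sub>m, T] \<le> \<Pi>\<^sub>m\<^sub>+\<^sub>1\<close>.
  Since \<open>(g h)\<^sup>G \<subseteq> g\<^sup>G h\<^sup>G\<close>, taking \<open>P\<^sub>a = [H, \<^sub>a g\<^sup>G]\<close> and \<open>Q\<^sub>b = [H, \<^sub>b h\<^sup>G]\<close> puts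
  \<open>[H, \<^sub>2\<^sub>M (g h)\<^sup>G]\<close> into \<open>\<Pi>\<^sub>2\<^sub>M\<close>, and in each term \<open>a \<ge> M\<close> or \<open>b \<ge> M\<close>; this is (ii).

  For (iii), \<open>\<rho>(N) = [N, \<^sub>M N]\<close> is the nilpotent residual of a normal subgroup \<open>N\<close>,
  and the Fitting length of \<open>K\<close> is the least \<open>d\<close> with \<open>\<rho>\<^sup>d(K) = 1\<close>. The same argument,
  with the lower central series of \<open>A\<close> and \<open>B\<close>, shows \<open>\<rho>(K) \<le> \<rho>(A) \<rho>(B)\<close> whenever
  \<open>K \<subseteq> A B\<close>; iterating, \<open>\<rho>\<^sup>d(\<eta>\<^sub>g\<^sub>h(H)) \<le> \<rho>\<^sup>d(\<eta>\<^sub>g(H)) \<rho>\<^sup>d(\<eta>\<^sub>h(H))\<close> by (ii).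
\<close>

section \<open>Commutators and conjugation-invariant sets\<close>

context group
begin

lemma normal_subset_carrier: "N \<lhd> G \<Longrightarrow> N \<subseteq> carrier G"
  using normal_imp_subgroup subgroup.subset by blast

lemma normal_trivialI: "N \<lhd> G \<Longrightarrow> N \<subseteq> {\<one>} \<Longrightarrow> N = {\<one>}"
  using normal_imp_subgroup subgroup.one_closed by blast

lemma inv_mult_cancel_left: "x \<in> carrier G \<Longrightarrow> y \<in> carrier G \<Longrightarrow> inv x \<otimes> (x \<otimes> y) = y"
  by (simp add: m_assoc[symmetric])

lemma mult_inv_cancel_left: "x \<in> carrier G \<Longrightarrow> y \<in> carrier G \<Longrightarrow> x \<otimes> (inv x \<otimes> y) = y"
  by (simp add: m_assoc[symmetric])

lemma gcomm_closed [simp]: "x \<in> carrier G \<Longrightarrow> y \<in> carrier G \<Longrightarrow> gcomm G x y \<in> carrier G"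
  unfolding gcomm_def by simp

lemma gcomm_one_left: "y \<in> carrier G \<Longrightarrow> gcomm G \<one> y = \<one>"
  by (simp add: gcomm_def m_assoc)

lemma gcomm_conj:
  assumes "g \<in> carrier G" "x \<in> carrier G" "y \<in> carrier G"
  shows "g \<otimes> gcomm G x y \<otimes> inv g = gcomm G (g \<otimes> x \<otimes> inv g) (g \<otimes> y \<otimes> inv g)"
  using assms by (simp add: gcomm_def m_assoc inv_mult_group inv_mult_cancel_left mult_inv_cancel_left)

lemma gcomm_inv_left:
  assumes "x \<in> carrier G" "y \<in> carrier G"
  shows "gcomm G (inv x) y = x \<otimes> inv (gcomm G x y) \<otimes> inv x"
  using assms by (simp add: gcomm_def m_assoc inv_mult_group inv_mult_cancel_left mult_inv_cancel_left)

lemma gcomm_mult_left: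
  assumes "a \<in> carrier G" "b \<in> carrier G" "y \<in> carrier G"
  shows "gcomm G (a \<otimes> b) y = inv b \<otimes> gcomm G a y \<otimes> b \<otimes> gcomm G b y"
  using assms by (simp add: gcomm_def m_assoc inv_mult_group inv_mult_cancel_left mult_inv_cancel_left)

lemma gcomm_mult_right:
  assumes "x \<in> carrier G" "c \<in> carrier G" "d \<in> carrier G"
  shows "gcomm G x (c \<otimes> d) = gcomm G x d \<otimes> (inv d \<otimes> gcomm G x c \<otimes> d)"
  using assms by (simp add: gcomm_def m_assoc inv_mult_group inv_mult_cancel_left mult_inv_cancel_left)

lemma gcomm_mem_normal_left:
  assumes N: "N \<lhd> G" and "x \<in> N" "y \<in> carrier G"
  shows "gcomm G x y \<in> N"
proof -
  interpret N: normal N G by (rule N)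
  have "gcomm G x y = inv x \<otimes> (inv y \<otimes> x \<otimes> y)"
    using assms by (simp add: gcomm_def m_assoc)
  then show ?thesis using assms N.inv_op_closed1 by simp
qed

lemma gcomm_mem_normal_right:
  assumes N: "N \<lhd> G" and "x \<in> carrier G" "y \<in> N"
  shows "gcomm G x y \<in> N"
proof -
  interpret N: normal N G by (rule N)
  have "gcomm G x y = (inv x \<otimes> inv y \<otimes> x) \<otimes> y"
    using assms by (simp add: gcomm_def m_assoc)
  then show ?thesis using assms N.inv_op_closed1 by simp
qed

lemma gcomm_mem_comm_sg: "x \<in> S \<Longrightarrow> y \<in> T \<Longrightarrow> gcomm G x y \<in> comm_sg G S T"
  unfolding comm_sg_def by (blast intro: generate.incl)

lemma gcomm_mem_iter_comm:
  "x \<in> iter_comm G S T n \<Longrightarrow> y \<in> T \<Longrightarrow> gcomm G x y \<in> iter_comm G S T (Suc n)"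
  by (simp add: gcomm_mem_comm_sg)

lemma comm_sg_mono: "S \<subseteq> S' \<Longrightarrow> T \<subseteq> T' \<Longrightarrow> comm_sg G S T \<subseteq> comm_sg G S' T'"
  unfolding comm_sg_def by (rule mono_generate) blast

lemma iter_comm_mono: "S \<subseteq> S' \<Longrightarrow> T \<subseteq> T' \<Longrightarrow> iter_comm G S T n \<subseteq> iter_comm G S' T' n"
  by (induction n) (simp_all add: comm_sg_mono)

lemma iter_comm_iter_comm: "iter_comm G (iter_comm G S T m) T n = iter_comm G S T (n + m)"
  by (induction n) auto

lemma comm_sg_subset_subgroup:
  assumes "subgroup L G" "\<And>x y. x \<in> S \<Longrightarrow> y \<in> T \<Longrightarrow> gcomm G x y \<in> L"
  shows "comm_sg G S T \<subseteq> L"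
  unfolding comm_sg_def using assms by (intro generate_subgroup_incl) auto

lemma comm_sg_subset_generate:
  assumes L: "L \<lhd> G" and U: "U \<subseteq> carrier G" and T: "T \<subseteq> carrier G"
    and gen: "\<And>u y. u \<in> U \<Longrightarrow> y \<in> T \<Longrightarrow> gcomm G u y \<in> L"
  shows "comm_sg G (generate G U) T \<subseteq> L"
proof (rule comm_sg_subset_subgroup)
  interpret L: normal L G by (rule L)
  show "subgroup L G" by (rule L.subgroup_axioms)
  fix x y assume x: "x \<in> generate G U" and y: "y \<in> T"
  then have yc: "y \<in> carrier G" using T by blast
  from x show "gcomm G x y \<in> L"
  proof (induction rule: generate.induct)
    case one
    then show ?case using yc by (simp add: gcomm_one_left)
  next
    case (incl u)
    then show ?case using gen y by blast
  next
    case (inv u)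
    then have "u \<in> carrier G" using U by blast
    then show ?case
      using gen[OF inv y] yc by (simp add: gcomm_inv_left L.inv_op_closed2)
  next
    case (eng a b)
    then have "a \<in> carrier G" "b \<in> carrier G"
      using U generate_in_carrier by auto
    then show ?case
      using eng.IH yc by (simp add: gcomm_mult_left L.inv_op_closed1)
  qed
qed

lemma conj_set_normal:
  assumes N: "N \<lhd> G" shows "conj_set G N = N"
proof
  show "conj_set G N \<subseteq> N"
    unfolding conj_set_def using N normal.inv_op_closed1 by fastforce
  show "N \<subseteq> conj_set G N"
  proof
    fix x assume x: "x \<in> N"
    then have "x = inv \<one> \<otimes> x \<otimes> \<one>"
      using N normal_imp_subgroup subgroup.mem_carrier by force
    then show "x \<in> conj_set G N" unfolding conj_set_def using x by blast
  qed
qed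

lemma conj_set_conj_class:
  assumes g: "g \<in> carrier G" shows "conj_set G (conj_class G g) = conj_class G g"
proof
  show "conj_set G (conj_class G g) \<subseteq> conj_class G g"
  proof
    fix z assume "z \<in> conj_set G (conj_class G g)"
    then obtain x y where xy: "x \<in> carrier G" "y \<in> carrier G" "z = inv y \<otimes> (inv x \<otimes> g \<otimes> x) \<otimes> y"
      unfolding conj_set_def conj_class_def by blast
    then have "z = inv (x \<otimes> y) \<otimes> g \<otimes> (x \<otimes> y)"
      using g by (simp add: m_assoc inv_mult_group)
    then show "z \<in> conj_class G g" unfolding conj_class_def using xy by blast
  qed
  show "conj_class G g \<subseteq> conj_set G (conj_class G g)"
  proof
    fix z assume z: "z \<in> conj_class G g"
    then have "z = inv \<one> \<otimes> z \<otimes> \<one>"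
      using g unfolding conj_class_def by force
    then show "z \<in> conj_set G (conj_class G g)" unfolding conj_set_def using z by blast
  qed
qed

lemma conj_class_subset_carrier: "g \<in> carrier G \<Longrightarrow> conj_class G g \<subseteq> carrier G"
  unfolding conj_class_def by auto

lemma conj_class_mult_subset:
  assumes "g \<in> carrier G" "h \<in> carrier G"
  shows "conj_class G (g \<otimes> h) \<subseteq> conj_class G g <#> conj_class G h"
proof
  fix z assume "z \<in> conj_class G (g \<otimes> h)"
  then obtain y where y: "y \<in> carrier G" "z = inv y \<otimes> (g \<otimes> h) \<otimes> y"
    unfolding conj_class_def by blast
  then have "z = (inv y \<otimes> g \<otimes> y) \<otimes> (inv y \<otimes> h \<otimes> y)"
    using assms by (simp add: m_assoc mult_inv_cancel_left)
  moreover have "inv y \<otimes> g \<otimes> y \<in> conj_class G g" "inv y \<otimes> h \<otimes> y \<in> conj_class G h"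
    unfolding conj_class_def using y by blast+
  ultimately show "z \<in> conj_class G g <#> conj_class G h"
    unfolding set_mult_def by blast
qed

lemma comm_sg_normal:
  assumes S: "S \<subseteq> carrier G" "conj_set G S = S" and T: "T \<subseteq> carrier G" "conj_set G T = T"
  shows "comm_sg G S T \<lhd> G"
  unfolding comm_sg_def
proof (rule normal_generateI)
  have conj_mem: "g \<otimes> x \<otimes> inv g \<in> U"
    if "conj_set G U = U" "x \<in> U" "g \<in> carrier G" for U x g
  proof -
    have "inv (inv g) \<otimes> x \<otimes> inv g \<in> conj_set G U"
      unfolding conj_set_def using that(2) inv_closed[OF that(3)] by blast
    then show ?thesis by (simp only: that(1) inv_inv[OF that(3)])
  qed
  show "{z. \<exists>x\<in>S. \<exists>y\<in>T. z = gcomm G x y} \<subseteq> carrier G"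
    using S T gcomm_closed by blast
  fix z g assume "z \<in> {z. \<exists>x\<in>S. \<exists>y\<in>T. z = gcomm G x y}" and g: "g \<in> carrier G"
  then obtain x y where xy: "x \<in> S" "y \<in> T" "z = gcomm G x y" by blast
  then have "g \<otimes> z \<otimes> inv g = gcomm G (g \<otimes> x \<otimes> inv g) (g \<otimes> y \<otimes> inv g)"
    using S T g gcomm_conj by (meson subsetD)
  moreover have "g \<otimes> x \<otimes> inv g \<in> S" "g \<otimes> y \<otimes> inv g \<in> T"
    using conj_mem S T xy g by blast+
  ultimately show "g \<otimes> z \<otimes> inv g \<in> {z. \<exists>x\<in>S. \<exists>y\<in>T. z = gcomm G x y}" by blast
qed

lemma iter_comm_normal:
  assumes "N \<lhd> G" "T \<subseteq> carrier G" "conj_set G T = T"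
  shows "iter_comm G N T n \<lhd> G"
proof (induction n)
  case 0
  then show ?case using assms by simp
next
  case (Suc n)
  have "iter_comm G N T n \<subseteq> carrier G"
    using normal_subset_carrier[OF Suc.IH] .
  then have "comm_sg G (iter_comm G N T n) T \<lhd> G"
    using comm_sg_normal conj_set_normal[OF Suc.IH] assms(2,3) by blast
  then show ?case by simp
qed

lemma eta_normal: "H \<lhd> G \<Longrightarrow> g \<in> carrier G \<Longrightarrow> eta G M g H \<lhd> G"
  unfolding eta_def by (simp add: iter_comm_normal conj_class_subset_carrier conj_set_conj_class)

lemma stab_const_iter_comm:
  assumes "stab_const G M" "N \<lhd> G" "T \<subseteq> carrier G" "conj_set G T = T" "M \<le> i"
  shows "iter_comm G N T i = iter_comm G N T M"
proof -
  have "N \<subseteq> carrier G" "conj_set G N = N"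
    using normal_subset_carrier conj_set_normal assms(2) by auto
  from assms(1)[unfolded stab_const_def, rule_format, OF this(1) assms(3) this(2) assms(4,5)]
  show ?thesis by (rule sym)
qed

lemma eta_eq_iter_comm:
  assumes "stab_const G M" "H \<lhd> G" "g \<in> carrier G" "M \<le> i"
  shows "eta G M g H = iter_comm G H (conj_class G g) i"
  unfolding eta_def using assms
  by (intro stab_const_iter_comm[symmetric] conj_class_subset_carrier conj_set_conj_class)

lemma eta_idem:
  assumes "stab_const G M" "H \<lhd> G" "g \<in> carrier G"
  shows "eta G M g (eta G M g H) = eta G M g H"
proof -
  have "eta G M g (eta G M g H) = iter_comm G H (conj_class G g) (M + M)"
    unfolding eta_def iter_comm_iter_comm ..
  then show ?thesis
    using eta_eq_iter_comm[OF assms, of "M + M"] by simp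
qed

end

section \<open>Filtering iterated commutators through two series\<close>

definition antidiagonal_product ::
    "('a, 'b) monoid_scheme \<Rightarrow> (nat \<Rightarrow> 'a set) \<Rightarrow> (nat \<Rightarrow> 'a set) \<Rightarrow> nat \<Rightarrow> 'a set" where
  "antidiagonal_product G P Q m = generate G (\<Union>a\<le>m. P a \<inter> Q (m - a))"

context group
begin

lemma antidiagonal_product_memI:
  assumes "x \<in> P a" "x \<in> Q b"
  shows "x \<in> antidiagonal_product G P Q (a + b)"
proof -
  have "x \<in> P a \<inter> Q (a + b - a)" using assms by simp
  then show ?thesis
    unfolding antidiagonal_product_def by (intro generate.incl UN_I[of a]) auto
qed

lemma antidiagonal_product_normal:
  assumes P: "\<And>a. P a \<lhd> G" and Q: "\<And>b. Q b \<lhd> G"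
  shows "antidiagonal_product G P Q m \<lhd> G"
  unfolding antidiagonal_product_def
proof (rule normal_generateI)
  show "(\<Union>a\<le>m. P a \<inter> Q (m - a)) \<subseteq> carrier G"
    using normal_subset_carrier[OF P] by blast
  fix x g assume "x \<in> (\<Union>a\<le>m. P a \<inter> Q (m - a))" and g: "g \<in> carrier G"
  then obtain a where "a \<le> m" "x \<in> P a" "x \<in> Q (m - a)" by blast
  then show "g \<otimes> x \<otimes> inv g \<in> (\<Union>a\<le>m. P a \<inter> Q (m - a))"
    using normal.inv_op_closed2[OF P g] normal.inv_op_closed2[OF Q g] by blast
qed

lemma comm_sg_antidiagonal_product_subset:
  assumes P: "\<And>a. P a \<lhd> G" and Q: "\<And>b. Q b \<lhd> G"
    and T1: "T1 \<subseteq> carrier G" and T2: "T2 \<subseteq> carrier G" and T: "T \<subseteq> T1 <#> T2"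
    and P_step: "\<And>a x c. x \<in> P a \<Longrightarrow> c \<in> T1 \<Longrightarrow> gcomm G x c \<in> P (Suc a)"
    and Q_step: "\<And>b x d. x \<in> Q b \<Longrightarrow> d \<in> T2 \<Longrightarrow> gcomm G x d \<in> Q (Suc b)"
  shows "comm_sg G (antidiagonal_product G P Q m) T \<subseteq> antidiagonal_product G P Q (Suc m)"
  unfolding antidiagonal_product_def[of G P Q m]
proof (rule comm_sg_subset_generate)
  let ?L = "antidiagonal_product G P Q (Suc m)"
  interpret L: normal ?L G using antidiagonal_product_normal[OF P Q] .
  show "?L \<lhd> G" by (rule L.normal_axioms)
  show "(\<Union>a\<le>m. P a \<inter> Q (m - a)) \<subseteq> carrier G"
    using normal_subset_carrier[OF P] by blast
  show "T \<subseteq> carrier G"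
    using T T1 T2 unfolding set_mult_def by blast
  fix u t assume "u \<in> (\<Union>a\<le>m. P a \<inter> Q (m - a))" "t \<in> T"
  then obtain a b c d where ab: "u \<in> P a" "u \<in> Q b" "a + b = m"
    and cd: "c \<in> T1" "d \<in> T2" "t = c \<otimes> d"
    using T unfolding set_mult_def by (auto simp: le_iff_add)
  have carr: "u \<in> carrier G" "c \<in> carrier G" "d \<in> carrier G"
    using ab(1) cd(1,2) normal_subset_carrier[OF P] T1 T2 by auto
  have "gcomm G u d \<in> antidiagonal_product G P Q (a + Suc b)"
    using gcomm_mem_normal_left[OF P ab(1) carr(3)] Q_step[OF ab(2) cd(2)]
    by (rule antidiagonal_product_memI)
  moreover have "gcomm G u c \<in> antidiagonal_product G P Q (Suc a + b)"
    using P_step[OF ab(1) cd(1)] gcomm_mem_normal_left[OF Q ab(2) carr(2)]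
    by (rule antidiagonal_product_memI)
  ultimately have "gcomm G u d \<in> ?L" "gcomm G u c \<in> ?L"
    using ab(3) by simp_all
  then show "gcomm G u t \<in> ?L"
    using carr by (simp add: cd(3) gcomm_mult_right L.inv_op_closed1 L.m_closed)
qed

lemma iter_comm_subset_antidiagonal_product:
  assumes P: "\<And>a. P a \<lhd> G" and Q: "\<And>b. Q b \<lhd> G"
    and T1: "T1 \<subseteq> carrier G" and T2: "T2 \<subseteq> carrier G" and T: "T \<subseteq> T1 <#> T2"
    and P_step: "\<And>a x c. x \<in> P a \<Longrightarrow> c \<in> T1 \<Longrightarrow> gcomm G x c \<in> P (Suc a)"
    and Q_step: "\<And>b x d. x \<in> Q b \<Longrightarrow> d \<in> T2 \<Longrightarrow> gcomm G x d \<in> Q (Suc b)"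
    and S: "S \<subseteq> antidiagonal_product G P Q k"
  shows "iter_comm G S T n \<subseteq> antidiagonal_product G P Q (k + n)"
proof (induction n)
  case 0
  then show ?case using S by simp
next
  case (Suc n)
  have "iter_comm G S T (Suc n) \<subseteq> comm_sg G (antidiagonal_product G P Q (k + n)) T"
    using comm_sg_mono[OF Suc.IH] by simp
  also have "\<dots> \<subseteq> antidiagonal_product G P Q (Suc (k + n))"
    by (rule comm_sg_antidiagonal_product_subset) (fact P Q T1 T2 T P_step Q_step)+
  finally show ?case by simp
qed

lemma antidiagonal_product_subset_set_mult:
  assumes A: "A \<lhd> G" and B: "B \<lhd> G"
    and PQ: "\<And>a. a \<le> m \<Longrightarrow> P a \<subseteq> A \<or> Q (m - a) \<subseteq> B"
  shows "antidiagonal_product G P Q m \<subseteq> A <#> B"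
  unfolding antidiagonal_product_def
proof (rule generate_subgroup_incl)
  show "subgroup (A <#> B) G"
    using normal_subgroup_set_mult_closed[OF A B] by (rule normal_imp_subgroup)
  have "A \<union> B \<subseteq> A <#> B"
  proof
    fix x assume "x \<in> A \<union> B"
    moreover have "x \<otimes> \<one> \<in> A <#> B" if "x \<in> A"
      using that subgroup.one_closed[OF normal_imp_subgroup[OF B]] unfolding set_mult_def by blast
    moreover have "\<one> \<otimes> x \<in> A <#> B" if "x \<in> B"
      using that subgroup.one_closed[OF normal_imp_subgroup[OF A]] unfolding set_mult_def by blast
    ultimately show "x \<in> A <#> B"
      using normal_subset_carrier[OF A] normal_subset_carrier[OF B] by auto
  qed
  then show "(\<Union>a\<le>m. P a \<inter> Q (m - a)) \<subseteq> A <#> B"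
    using PQ by blast
qed

lemma eta_mult_subset:
  assumes st: "stab_const G M" and H: "H \<lhd> G" and g: "g \<in> carrier G" and h: "h \<in> carrier G"
  shows "eta G M (g \<otimes> h) H \<subseteq> eta G M g H <#> eta G M h H"
proof -
  define P where "P = iter_comm G H (conj_class G g)"
  define Q where "Q = iter_comm G H (conj_class G h)"
  have P_normal: "\<And>a. P a \<lhd> G" and Q_normal: "\<And>b. Q b \<lhd> G"
    unfolding P_def Q_def using H g h
    by (simp_all add: iter_comm_normal conj_class_subset_carrier conj_set_conj_class)
  have P_step: "\<And>a x c. x \<in> P a \<Longrightarrow> c \<in> conj_class G g \<Longrightarrow> gcomm G x c \<in> P (Suc a)"
    and Q_step: "\<And>b x d. x \<in> Q b \<Longrightarrow> d \<in> conj_class G h \<Longrightarrow> gcomm G x d \<in> Q (Suc b)"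
    unfolding P_def Q_def by (simp_all only: gcomm_mem_iter_comm)
  have P_eta: "P a = eta G M g H" if "M \<le> a" for a
    unfolding P_def using eta_eq_iter_comm[OF st H g that] by simp
  have Q_eta: "Q b = eta G M h H" if "M \<le> b" for b
    unfolding Q_def using eta_eq_iter_comm[OF st H h that] by simp
  have "H \<subseteq> antidiagonal_product G P Q (0 + 0)"
    using antidiagonal_product_memI[of _ P 0 Q 0] unfolding P_def Q_def by auto
  note iter_subset = iter_comm_subset_antidiagonal_product[where P = P and Q = Q and n = "M + M",
      OF P_normal Q_normal conj_class_subset_carrier[OF g] conj_class_subset_carrier[OF h]
      conj_class_mult_subset[OF g h] P_step Q_step this]
  have "eta G M (g \<otimes> h) H = iter_comm G H (conj_class G (g \<otimes> h)) (M + M)"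
    using g h by (intro eta_eq_iter_comm st H) simp_all
  also have "\<dots> \<subseteq> antidiagonal_product G P Q (M + M)"
    using iter_subset by simp
  also have "\<dots> \<subseteq> eta G M g H <#> eta G M h H"
  proof (rule antidiagonal_product_subset_set_mult[OF eta_normal[OF H g] eta_normal[OF H h]])
    fix a
    show "P a \<subseteq> eta G M g H \<or> Q (M + M - a) \<subseteq> eta G M h H"
      using P_eta[of a] Q_eta[of "M + M - a"] by (cases "M \<le> a") simp_all
  qed
  finally show ?thesis .
qed

end

section \<open>Nilpotent quotients\<close>

context group
begin

lemma lcs_subset_carrier: "lcs G k \<subseteq> carrier G"
proof (induction k)
  case (Suc k)
  then have "{z. \<exists>x\<in>lcs G k. \<exists>y\<in>carrier G. z = gcomm G x y} \<subseteq> carrier G"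
    by auto
  then show ?case by (simp add: comm_sg_def generate_incl)
qed simp

lemma one_mem_lcs: "\<one> \<in> lcs G k"
  by (cases k) (simp_all add: comm_sg_def generate.one)

lemma gcomm_subgroup:
  "subgroup P G \<Longrightarrow> x \<in> P \<Longrightarrow> y \<in> P \<Longrightarrow> gcomm (G\<lparr>carrier := P\<rparr>) x y = gcomm G x y"
  unfolding gcomm_def by simp

lemma lcs_subgroup:
  assumes P: "subgroup P G"
  shows "lcs (G\<lparr>carrier := P\<rparr>) k = iter_comm G P P k"
proof (induction k)
  case 0
  then show ?case by simp
next
  case (Suc k)
  interpret P: group "G\<lparr>carrier := P\<rparr>" using subgroup_imp_group[OF P] .
  have "iter_comm G P P k \<subseteq> P"
    using Suc.IH P.lcs_subset_carrier by auto
  then have "gcomm (G\<lparr>carrier := P\<rparr>) x y = gcomm G x y" if "x \<in> iter_comm G P P k" "y \<in> P" for x y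
    using that by (intro gcomm_subgroup[OF P]) auto
  then have "{z. \<exists>x\<in>iter_comm G P P k. \<exists>y\<in>P. z = gcomm (G\<lparr>carrier := P\<rparr>) x y}
      = {z. \<exists>x\<in>iter_comm G P P k. \<exists>y\<in>P. z = gcomm G x y}"
    by auto
  moreover have "{z. \<exists>x\<in>iter_comm G P P k. \<exists>y\<in>P. z = gcomm G x y} \<subseteq> P"
    using \<open>iter_comm G P P k \<subseteq> P\<close> P unfolding gcomm_def
    by (auto intro!: subgroup.m_closed[OF P] subgroup.m_inv_closed[OF P])
  ultimately show ?case
    using Suc.IH P by (simp add: comm_sg_def generate_consistent)
qed

end

lemma (in group_hom) hom_gcomm:
  "x \<in> carrier G \<Longrightarrow> y \<in> carrier G \<Longrightarrow> h (gcomm G x y) = gcomm H (h x) (h y)"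
  unfolding gcomm_def by simp

lemma (in group_hom) lcs_image:
  assumes surj: "h ` carrier G = carrier H"
  shows "lcs H k = h ` lcs G k"
proof (induction k)
  case 0
  then show ?case using surj by simp
next
  case (Suc k)
  let ?C = "{z. \<exists>x\<in>lcs G k. \<exists>y\<in>carrier G. z = gcomm G x y}"
  have comm: "gcomm H (h x) (h y) = h (gcomm G x y)" if "x \<in> lcs G k" "y \<in> carrier G" for x y
    using that G.lcs_subset_carrier by (simp add: hom_gcomm subset_iff)
  have "{z. \<exists>x\<in>lcs H k. \<exists>y\<in>carrier H. z = gcomm H x y} = h ` ?C"
    unfolding Suc.IH surj[symmetric] by (auto simp: comm)
  moreover have "?C \<subseteq> carrier G"
    using G.lcs_subset_carrier by (blast intro: G.gcomm_closed)
  ultimately show ?case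
    by (simp add: comm_sg_def generate_img)
qed

lemma (in normal) lcs_Mod: "lcs (G Mod H) k = (\<lambda>x. H #> x) ` lcs G k"
proof (rule group_hom.lcs_image)
  show "group_hom G (G Mod H) (\<lambda>x. H #> x)"
    using r_coset_hom_Mod factorgroup_is_group is_group by (simp add: group_hom_def group_hom_axioms_def)
  show "(\<lambda>x. H #> x) ` carrier G = carrier (G Mod H)"
    by (auto simp: FactGroup_def RCOSETS_def)
qed

context group
begin

lemma nilpotent_Mod_iff:
  assumes N: "N \<lhd> G"
  shows "nilpotent_grp (G Mod N) \<longleftrightarrow> (\<exists>k. lcs G k \<subseteq> N)"
proof -
  interpret N: normal N G by (rule N)
  have "lcs (G Mod N) k = {N} \<longleftrightarrow> lcs G k \<subseteq> N" for k
  proof -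
    have "N #> x = N \<longleftrightarrow> x \<in> N" if "x \<in> lcs G k" for x
      using that lcs_subset_carrier coset_join1 coset_join2 N.subgroup_axioms by blast
    then show ?thesis
      using one_mem_lcs[of k] by (auto simp: N.lcs_Mod)
  qed
  then show ?thesis
    using N.factorgroup_is_group by (simp add: nilpotent_grp_def)
qed

lemma nilpotent_quotient_iff:
  assumes P: "subgroup P G" and Q: "Q \<lhd> G\<lparr>carrier := P\<rparr>"
  shows "nilpotent_grp (G\<lparr>carrier := P\<rparr> Mod Q) \<longleftrightarrow> (\<exists>k. iter_comm G P P k \<subseteq> Q)"
proof -
  interpret P: group "G\<lparr>carrier := P\<rparr>" using subgroup_imp_group[OF P] .
  show ?thesis
    using P.nilpotent_Mod_iff[OF Q] by (simp add: lcs_subgroup[OF P])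
qed

lemma iter_comm_subset_normal_subgroup:
  assumes P: "subgroup P G" and Q: "Q \<lhd> G\<lparr>carrier := P\<rparr>" and "S \<subseteq> Q" "T \<subseteq> P"
  shows "iter_comm G S T n \<subseteq> Q"
proof (induction n)
  case 0
  then show ?case using assms by simp
next
  case (Suc n)
  interpret P: group "G\<lparr>carrier := P\<rparr>" using subgroup_imp_group[OF P] .
  have QP: "Q \<subseteq> P" using P.normal_subset_carrier[OF Q] by simp
  have "subgroup Q G"
    using incl_subgroup[OF P normal_imp_subgroup[OF Q]] .
  show ?case
    unfolding iter_comm.simps
  proof (rule comm_sg_subset_subgroup)
    show "subgroup Q G" by fact
    fix x y assume "x \<in> iter_comm G S T n" "y \<in> T"
    then have "gcomm (G\<lparr>carrier := P\<rparr>) x y \<in> Q"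
      using Suc.IH \<open>T \<subseteq> P\<close> by (intro P.gcomm_mem_normal_left[OF Q]) auto
    then show "gcomm G x y \<in> Q"
      using Suc.IH QP \<open>T \<subseteq> P\<close> \<open>x \<in> iter_comm G S T n\<close> \<open>y \<in> T\<close>
      by (subst (asm) gcomm_subgroup[OF P]) auto
  qed
qed

lemma iter_comm_subset_normal:
  assumes "N \<lhd> G" "S \<subseteq> N" "T \<subseteq> carrier G"
  shows "iter_comm G S T n \<subseteq> N"
  using iter_comm_subset_normal_subgroup[OF subgroup_self] assms by simp

end

section \<open>The nilpotent residual and Fitting length\<close>

text \<open>With \<open>M\<close> a stabilisation constant, this is the nilpotent residual of a normal subgroup
  \<open>N\<close>: the least normal subgroup of \<open>N\<close> with nilpotent quotient.\<close>

definition nil_residual :: "('a, 'b) monoid_scheme \<Rightarrow> nat \<Rightarrow> 'a set \<Rightarrow> 'a set" where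
  "nil_residual G M N = iter_comm G N N M"

lemma FitL_le_enat_iff: "FitL A \<le> enat d \<longleftrightarrow> (\<exists>e\<le>d. \<exists>S. nil_series A S e)"
proof
  assume "FitL A \<le> enat d"
  then have ex: "\<exists>e S. nil_series A S e" and "(LEAST e. \<exists>S. nil_series A S e) \<le> d"
    unfolding FitL_def by (auto split: if_splits)
  then show "\<exists>e\<le>d. \<exists>S. nil_series A S e"
    using LeastI_ex[OF ex] by blast
next
  assume "\<exists>e\<le>d. \<exists>S. nil_series A S e"
  then obtain e S where "e \<le> d" "nil_series A S e" by blast
  moreover have "(LEAST e. \<exists>S. nil_series A S e) \<le> e"
    using \<open>nil_series A S e\<close> by (blast intro: Least_le)
  ultimately show "FitL A \<le> enat d"
    unfolding FitL_def by auto
qed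

context group
begin

lemma nil_residual_normal: "N \<lhd> G \<Longrightarrow> nil_residual G M N \<lhd> G"
  unfolding nil_residual_def by (simp add: iter_comm_normal normal_subset_carrier conj_set_normal)

lemma nil_residual_subset: "N \<lhd> G \<Longrightarrow> nil_residual G M N \<subseteq> N"
  unfolding nil_residual_def by (simp add: iter_comm_subset_normal normal_subset_carrier)

lemma nil_residual_pow_normal: "N \<lhd> G \<Longrightarrow> (nil_residual G M ^^ i) N \<lhd> G"
  by (induction i) (simp_all add: nil_residual_normal)

lemma nil_residual_pow_subset: "N \<lhd> G \<Longrightarrow> (nil_residual G M ^^ i) N \<subseteq> N"
proof (induction i)
  case (Suc i)
  then show ?case
    using nil_residual_subset[OF nil_residual_pow_normal[OF Suc.prems, of i]] by auto
qed simp

lemma nil_residual_eq_iter_comm: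
  "stab_const G M \<Longrightarrow> N \<lhd> G \<Longrightarrow> M \<le> i \<Longrightarrow> nil_residual G M N = iter_comm G N N i"
  unfolding nil_residual_def
  by (intro stab_const_iter_comm[symmetric] normal_subset_carrier conj_set_normal)

lemma nil_residual_pow_trivial:
  assumes "N \<lhd> G" "(nil_residual G M ^^ d) N = {\<one>}" "d \<le> e"
  shows "(nil_residual G M ^^ e) N = {\<one>}"
proof -
  have "(nil_residual G M ^^ e) N = (nil_residual G M ^^ (e - d)) {\<one>}"
    using assms(2,3) by (metis funpow_add le_add_diff_inverse2 o_apply)
  also have "\<dots> \<subseteq> {\<one>}"
    using nil_residual_pow_subset[OF one_is_normal] .
  finally show ?thesis
    by (rule normal_trivialI[OF nil_residual_pow_normal[OF assms(1)]])
qed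

lemma nil_residual_subset_of_nilpotent_quotient:
  assumes st: "stab_const G M" and N: "N \<lhd> G" and P: "subgroup P G" "N \<subseteq> P"
    and Q: "Q \<lhd> G\<lparr>carrier := P\<rparr>" and nil: "nilpotent_grp (G\<lparr>carrier := P\<rparr> Mod Q)"
  shows "nil_residual G M N \<subseteq> Q"
proof -
  obtain k where k: "iter_comm G P P k \<subseteq> Q"
    using nil nilpotent_quotient_iff[OF P(1) Q] by blast
  have "nil_residual G M N = iter_comm G (iter_comm G N N k) N M"
    unfolding iter_comm_iter_comm using nil_residual_eq_iter_comm[OF st N] by simp
  also have "\<dots> \<subseteq> iter_comm G (iter_comm G P P k) P M"
    using P(2) by (intro iter_comm_mono) simp_all
  also have "\<dots> \<subseteq> Q"
    by (rule iter_comm_subset_normal_subgroup[OF P(1) Q k order_refl])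
  finally show ?thesis .
qed

lemma nil_residual_normal_in: "N \<lhd> G \<Longrightarrow> nil_residual G M N \<lhd> G\<lparr>carrier := N\<rparr>"
  by (intro normal_restrict_supergroup normal_imp_subgroup nil_residual_normal nil_residual_subset)

lemma nilpotent_Mod_nil_residual:
  "N \<lhd> G \<Longrightarrow> nilpotent_grp (G\<lparr>carrier := N\<rparr> Mod nil_residual G M N)"
  using nilpotent_quotient_iff[OF normal_imp_subgroup nil_residual_normal_in]
  unfolding nil_residual_def by blast

lemma nil_series_imp_nil_residual_pow:
  assumes st: "stab_const G M" and K: "K \<lhd> G" and S: "nil_series (G\<lparr>carrier := K\<rparr>) S d"
  shows "(nil_residual G M ^^ d) K = {\<one>}"
proof -
  have S0: "S 0 = {\<one>}" and Sd: "S d = K"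
    and S_subgroup: "\<And>i. i \<le> d \<Longrightarrow> subgroup (S i) (G\<lparr>carrier := K\<rparr>)"
    and S_normal: "\<And>i. i < d \<Longrightarrow> S i \<lhd> G\<lparr>carrier := S (Suc i)\<rparr>"
    and S_nil: "\<And>i. i < d \<Longrightarrow> nilpotent_grp (G\<lparr>carrier := S (Suc i)\<rparr> Mod S i)"
    using S unfolding nil_series_def by auto
  have "(nil_residual G M ^^ i) K \<subseteq> S (d - i)" if "i \<le> d" for i
    using that
  proof (induction i)
    case 0
    then show ?case using Sd by simp
  next
    case (Suc i)
    then have j: "d - i = Suc (d - Suc i)" "d - Suc i < d" by auto
    show ?case
      unfolding funpow.simps(2) o_apply
    proof (rule nil_residual_subset_of_nilpotent_quotient[OF st nil_residual_pow_normal[OF K]])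
      show "subgroup (S (d - i)) G"
        using incl_subgroup[OF normal_imp_subgroup[OF K] S_subgroup] by simp
      show "(nil_residual G M ^^ i) K \<subseteq> S (d - i)" using Suc by simp
      show "S (d - Suc i) \<lhd> G\<lparr>carrier := S (d - i)\<rparr>"
        using S_normal[OF j(2)] by (simp only: j(1))
      show "nilpotent_grp (G\<lparr>carrier := S (d - i)\<rparr> Mod S (d - Suc i))"
        using S_nil[OF j(2)] by (simp only: j(1))
    qed
  qed
  from this[of d] have "(nil_residual G M ^^ d) K \<subseteq> {\<one>}"
    using S0 by simp
  then show ?thesis
    by (rule normal_trivialI[OF nil_residual_pow_normal[OF K]])
qed

lemma nil_series_nil_residual_pow:
  assumes K: "K \<lhd> G" and trivial: "(nil_residual G M ^^ d) K = {\<one>}"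
  shows "nil_series (G\<lparr>carrier := K\<rparr>) (\<lambda>i. (nil_residual G M ^^ (d - i)) K) d"
  unfolding nil_series_def
proof (intro conjI allI impI)
  show "(nil_residual G M ^^ (d - 0)) K = {\<one>\<^bsub>G\<lparr>carrier := K\<rparr>\<^esub>}"
    using trivial by simp
  show "(nil_residual G M ^^ (d - d)) K = carrier (G\<lparr>carrier := K\<rparr>)"
    by simp
  fix i
  show "subgroup ((nil_residual G M ^^ (d - i)) K) (G\<lparr>carrier := K\<rparr>)"
    by (intro subgroup_incl normal_imp_subgroup nil_residual_pow_normal nil_residual_pow_subset K)
  assume "i < d"
  then have "d - i = Suc (d - Suc i)" by simp
  then have pow: "(nil_residual G M ^^ (d - i)) K = nil_residual G M ((nil_residual G M ^^ (d - Suc i)) K)"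
    by simp
  show "(nil_residual G M ^^ (d - i)) K
      \<lhd> G\<lparr>carrier := K\<rparr>\<lparr>carrier := (nil_residual G M ^^ (d - Suc i)) K\<rparr>"
    unfolding pow by (simp add: nil_residual_normal_in nil_residual_pow_normal K)
  show "nilpotent_grp (G\<lparr>carrier := K\<rparr>\<lparr>carrier := (nil_residual G M ^^ (d - Suc i)) K\<rparr>
      Mod (nil_residual G M ^^ (d - i)) K)"
    unfolding pow by (simp add: nilpotent_Mod_nil_residual nil_residual_pow_normal K)
qed

lemma FitL_le_iff:
  assumes st: "stab_const G M" and K: "K \<lhd> G"
  shows "FitL (G\<lparr>carrier := K\<rparr>) \<le> enat d \<longleftrightarrow> (nil_residual G M ^^ d) K = {\<one>}"
proof
  assume "FitL (G\<lparr>carrier := K\<rparr>) \<le> enat d"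
  then obtain e S where "e \<le> d" "nil_series (G\<lparr>carrier := K\<rparr>) S e"
    unfolding FitL_le_enat_iff by blast
  then show "(nil_residual G M ^^ d) K = {\<one>}"
    using nil_residual_pow_trivial[OF K nil_series_imp_nil_residual_pow[OF st K]] by blast
next
  assume "(nil_residual G M ^^ d) K = {\<one>}"
  then show "FitL (G\<lparr>carrier := K\<rparr>) \<le> enat d"
    unfolding FitL_le_enat_iff using nil_series_nil_residual_pow[OF K] by blast
qed

end

text \<open>The lower central series of \<open>A\<close> shifted up by one, with \<open>G\<close> in front, so that
  \<open>A B\<close> lies in level \<open>1\<close> of the antidiagonal product of the series for \<open>A\<close> and \<open>B\<close>.\<close>

definition shifted_lcs :: "('a, 'b) monoid_scheme \<Rightarrow> 'a set \<Rightarrow> nat \<Rightarrow> 'a set" where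
  "shifted_lcs G A a = (case a of 0 \<Rightarrow> carrier G | Suc j \<Rightarrow> iter_comm G A A j)"

context group
begin

lemma shifted_lcs_normal: "A \<lhd> G \<Longrightarrow> shifted_lcs G A a \<lhd> G"
  unfolding shifted_lcs_def
  by (cases a) (simp_all add: normal_self iter_comm_normal normal_subset_carrier conj_set_normal)

lemma gcomm_mem_shifted_lcs:
  assumes A: "A \<lhd> G" and x: "x \<in> shifted_lcs G A a" and y: "y \<in> A"
  shows "gcomm G x y \<in> shifted_lcs G A (Suc a)"
proof (cases a)
  case 0
  then show ?thesis
    using x y gcomm_mem_normal_right[OF A] by (simp add: shifted_lcs_def)
next
  case (Suc j)
  then show ?thesis
    using x y gcomm_mem_iter_comm by (simp add: shifted_lcs_def)
qed

lemma shifted_lcs_nil_residual: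
  assumes "stab_const G M" "A \<lhd> G" "M < a"
  shows "shifted_lcs G A a = nil_residual G M A"
proof -
  obtain j where j: "a = Suc j" "M \<le> j" using assms(3) by (cases a) auto
  then show ?thesis
    unfolding shifted_lcs_def using nil_residual_eq_iter_comm[OF assms(1,2) j(2)] by simp
qed

lemma nil_residual_set_mult_subset:
  assumes st: "stab_const G M" and A: "A \<lhd> G" and B: "B \<lhd> G"
    and K: "K \<lhd> G" and K_AB: "K \<subseteq> A <#> B"
  shows "nil_residual G M K \<subseteq> nil_residual G M A <#> nil_residual G M B"
proof -
  define P where "P = shifted_lcs G A"
  define Q where "Q = shifted_lcs G B"
  have P_normal: "\<And>a. P a \<lhd> G" and Q_normal: "\<And>b. Q b \<lhd> G"
    unfolding P_def Q_def using A B by (simp_all add: shifted_lcs_normal)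
  have P_step: "\<And>a x c. x \<in> P a \<Longrightarrow> c \<in> A \<Longrightarrow> gcomm G x c \<in> P (Suc a)"
    and Q_step: "\<And>b x d. x \<in> Q b \<Longrightarrow> d \<in> B \<Longrightarrow> gcomm G x d \<in> Q (Suc b)"
    unfolding P_def Q_def using A B by (simp_all add: gcomm_mem_shifted_lcs)
  have "A <#> B \<subseteq> antidiagonal_product G P Q 1"
  proof
    fix z assume "z \<in> A <#> B"
    then obtain x y where xy: "x \<in> A" "y \<in> B" "z = x \<otimes> y"
      unfolding set_mult_def by blast
    have "x \<in> antidiagonal_product G P Q (1 + 0)" "y \<in> antidiagonal_product G P Q (0 + 1)"
      using xy normal_subset_carrier[OF A] normal_subset_carrier[OF B]
      by (intro antidiagonal_product_memI; force simp: P_def Q_def shifted_lcs_def)+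
    then show "z \<in> antidiagonal_product G P Q 1"
      unfolding xy(3) antidiagonal_product_def by (simp add: generate.eng)
  qed
  note iter_subset = iter_comm_subset_antidiagonal_product[where P = P and Q = Q and n = "M + M + 1",
      OF P_normal Q_normal normal_subset_carrier[OF A] normal_subset_carrier[OF B] order_refl
      P_step Q_step this]
  have "nil_residual G M K = iter_comm G K K (M + M + 1)"
    by (rule nil_residual_eq_iter_comm[OF st K]) simp
  also have "\<dots> \<subseteq> iter_comm G (A <#> B) (A <#> B) (M + M + 1)"
    by (intro iter_comm_mono K_AB)
  also have "\<dots> \<subseteq> antidiagonal_product G P Q (M + M + 2)"
    using iter_subset by simp
  also have "\<dots> \<subseteq> nil_residual G M A <#> nil_residual G M B"
  proof (rule antidiagonal_product_subset_set_mult[OF nil_residual_normal[OF A] nil_residual_normal[OF B]])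
    fix a
    show "P a \<subseteq> nil_residual G M A \<or> Q (M + M + 2 - a) \<subseteq> nil_residual G M B"
      using shifted_lcs_nil_residual[OF st A, of a] shifted_lcs_nil_residual[OF st B, of "M + M + 2 - a"]
      unfolding P_def Q_def by (cases "M < a") simp_all
  qed
  finally show ?thesis .
qed

lemma nil_residual_pow_set_mult_subset:
  assumes st: "stab_const G M" and A: "A \<lhd> G" and B: "B \<lhd> G"
    and K: "K \<lhd> G" and K_AB: "K \<subseteq> A <#> B"
  shows "(nil_residual G M ^^ i) K \<subseteq> (nil_residual G M ^^ i) A <#> (nil_residual G M ^^ i) B"
proof (induction i)
  case 0
  then show ?case using K_AB by simp
next
  case (Suc i)
  then show ?case
    using nil_residual_set_mult_subset[OF st nil_residual_pow_normal[OF A]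
        nil_residual_pow_normal[OF B] nil_residual_pow_normal[OF K]]
    by simp
qed

lemma FitL_le_max:
  assumes st: "stab_const G M" and A: "A \<lhd> G" and B: "B \<lhd> G"
    and K: "K \<lhd> G" and K_AB: "K \<subseteq> A <#> B"
  shows "FitL (G\<lparr>carrier := K\<rparr>) \<le> max (FitL (G\<lparr>carrier := A\<rparr>)) (FitL (G\<lparr>carrier := B\<rparr>))"
proof (cases "max (FitL (G\<lparr>carrier := A\<rparr>)) (FitL (G\<lparr>carrier := B\<rparr>))")
  case (enat d)
  then have "(nil_residual G M ^^ d) A = {\<one>}" "(nil_residual G M ^^ d) B = {\<one>}"
    using FitL_le_iff[OF st A] FitL_le_iff[OF st B] by (metis max.bounded_iff order_refl)+
  then have "(nil_residual G M ^^ d) K \<subseteq> {\<one>}"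
    using nil_residual_pow_set_mult_subset[OF st A B K K_AB, of d] by (simp add: set_mult_def)
  then have "(nil_residual G M ^^ d) K = {\<one>}"
    by (rule normal_trivialI[OF nil_residual_pow_normal[OF K]])
  then show ?thesis
    using FitL_le_iff[OF st K] enat by simp
qed simp

end

theorem lemma4p1:
  fixes G (structure) and H :: "'a set" and g h :: 'a and M :: nat
  assumes "group G" and "finite (carrier G)"
    and "H \<lhd> G"
    and "g \<in> carrier G" and "h \<in> carrier G"
    and "stab_const G M"
  shows "eta G M g (eta G M g H) = eta G M g H
    \<and> eta G M (g \<otimes> h) H \<subseteq> eta G M g H <#> eta G M h H
    \<and> FitL (G\<lparr>carrier := eta G M (g \<otimes> h) H\<rparr>)
           \<le> max (FitL (G\<lparr>carrier := eta G M g H\<rparr>)) (FitL (G\<lparr>carrier := eta G M h H\<rparr>))"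
proof -
  \<comment> \<open>Finiteness only serves to guarantee a stabilisation constant, which \<open>stab_const G M\<close> provides.\<close>
  interpret group G by fact
  have gh: "g \<otimes> h \<in> carrier G" using assms(4,5) by simp
  have product: "eta G M (g \<otimes> h) H \<subseteq> eta G M g H <#> eta G M h H"
    using eta_mult_subset[OF assms(6,3,4,5)] .
  show ?thesis
    using eta_idem[OF assms(6,3,4)] product
      FitL_le_max[OF assms(6) eta_normal[OF assms(3,4)] eta_normal[OF assms(3,5)]
        eta_normal[OF assms(3) gh] product]
    by blast
qed

end
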